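(* For every $\beta\in\mathbb N^d\setminus\{0\}$, $$\sum_{r=1}^{|\beta|}\binom{|\beta|}{r}\sum_{p(\beta,r)}\frac{r!}{k_1!\cdots k_{|\beta|}!}\le2^{|\beta|(d+1)}.$$
   Context: For $\alpha,\gamma\in\mathbb N^d$ write $\gamma\prec\alpha$ if either $|\gamma|<|\alpha|$; or $|\gamma|=|\alpha|$ and $\gamma_1<\alpha_1$; or $|\gamma|=|\alpha|$, $\gamma_1=\alpha_1,\dots,\gamma_k=\alpha_k$ and $\gamma_{k+1}<\alpha_{k+1}$ for some $1\le k<d$. For $\beta\in\mathbb N^d$ with $n=|\beta|\ge1$ and $1\le r\le n$, $p(\beta,r)$ is the set of tuples $(k_1,\dots,k_n;\beta^{(1)},\dots,\beta^{(n)})$ with $k_j\in\mathbb N$, $\beta^{(j)}\in\mathbb N^d$, such that for some $1\le s\le n$: $k_j=0$ and $\beta^{(j)}=0$ for $1\le j\le n-s$; $k_j>0$ for $n-s+1\le j\le n$; $0\prec\beta^{(n-s+1)}\prec\dots\prec\beta^{(n)}$; and $\sum_jk_j=r$, $\sum_jk_j\beta^{(j)}=\beta$ (this is the index set of the multivariate Faà di Bruno formula). *)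

theory Defs
  imports Complex_Main
begin

text \<open>Multi-indices in N^d are represented as lists of naturals of length d
  (0-based components). The order gamma < alpha of the paper:\<close>

definition mi_prec :: "nat \<Rightarrow> nat list \<Rightarrow> nat list \<Rightarrow> bool" where
  "mi_prec d \<gamma> \<alpha> \<longleftrightarrow>
     sum_list \<gamma> < sum_list \<alpha> \<or>
     (sum_list \<gamma> = sum_list \<alpha> \<and>
        (\<exists>k<d. (\<forall>i<k. \<gamma> ! i = \<alpha> ! i) \<and> \<gamma> ! k < \<alpha> ! k))"

text \<open>A tuple (k_1..k_n; beta^(1)..beta^(n)) is a pair of lists (k, B) of length
  n = |beta| (0-based: entry j stands for index j+1), each B!j of length d.\<close>

definition faa_p :: "nat \<Rightarrow> nat list \<Rightarrow> nat \<Rightarrow> (nat list \<times> nat list list) set" where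
  "faa_p d \<beta> r = (let n = sum_list \<beta> in
     {(k, B). length k = n \<and> length B = n \<and> (\<forall>j<n. length (B ! j) = d) \<and>
       (\<exists>s. 1 \<le> s \<and> s \<le> n \<and>
          (\<forall>j<n - s. k ! j = 0 \<and> B ! j = replicate d 0) \<and>
          (\<forall>j. n - s \<le> j \<and> j < n \<longrightarrow> 0 < k ! j) \<and>
          mi_prec d (replicate d 0) (B ! (n - s)) \<and>
          (\<forall>j. n - s \<le> j \<and> j + 1 < n \<longrightarrow> mi_prec d (B ! j) (B ! (j + 1)))) \<and>
       sum_list k = r \<and>
       (\<forall>i<d. (\<Sum>j<n. k ! j * (B ! j) ! i) = \<beta> ! i)})"

end

theory Submission
  imports Defs "HOL-Combinatorics.Multiset_Permutations"
begin

(* A tuple in p(beta, r) lists nonzero multi-indices beta^(j) with multiplicities k_j, strictly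
   increasing for the order, so it is determined by the multiset M in which each beta^(j) occurs
   k_j times, and r!/(k_1! ... k_n!) is the number of orderings of M. Hence the inner sum counts
   the ordered compositions of beta into r nonzero parts, and the sum over r is at most the
   number of all ordered compositions of beta. That number is at most (2d)^|beta|: taking one
   unit off a coordinate i of the first part either deletes that part or leaves a composition of
   beta - e_i. Together with binom(|beta|, r) <= 2^|beta| and 2d <= 2^d this gives the bound. *)

lemma mi_prec_trans: "mi_prec d a b \<Longrightarrow> mi_prec d b c \<Longrightarrow> mi_prec d a c"
  unfolding mi_prec_def
proof (elim disjE conjE exE)
  fix k1 k2
  assume h: "sum_list a = sum_list b" "k1 < d" "\<forall>i<k1. a ! i = b ! i" "a ! k1 < b ! k1"
    "sum_list b = sum_list c" "k2 < d" "\<forall>i<k2. b ! i = c ! i" "b ! k2 < c ! k2"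
  show "sum_list a < sum_list c \<or> sum_list a = sum_list c \<and> (\<exists>k<d. (\<forall>i<k. a ! i = c ! i) \<and> a ! k < c ! k)"
  proof (cases "k1 < k2")
    case True then show ?thesis using h by (intro disjI2) (auto intro!: exI[of _ k1])
  next
    case False then show ?thesis using h
      by (intro disjI2, cases "k1 = k2") (auto intro!: exI[of _ k2])
  qed
qed auto

lemma transp_mi_prec: "transp (mi_prec d)"
  by (rule transpI) (rule mi_prec_trans)

lemma asymp_mi_prec: "asymp (mi_prec d)"
  unfolding mi_prec_def
  by (rule asympI) (metis linorder_neqE_nat not_less_iff_gr_or_eq order_less_asym)

lemma sorted_wrt_asymp_distinct:
  assumes "asymp R" and "sorted_wrt R xs"
  shows "distinct xs"
  using assms(2) by (induction xs) (use assms(1) in \<open>auto dest: asympD\<close>)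

lemma sorted_wrt_asymp_unique:
  assumes "asymp R"
  shows "sorted_wrt R xs \<Longrightarrow> sorted_wrt R ys \<Longrightarrow> set xs = set ys \<Longrightarrow> xs = ys"
proof (induction xs arbitrary: ys)
  case Nil then show ?case by simp
next
  case (Cons x xs)
  then obtain y ys' where ys: "ys = y # ys'" by (cases ys) auto
  have "x = y"
  proof (rule ccontr)
    assume "x \<noteq> y"
    then have "R x y" "R y x" using Cons.prems ys by auto
    then show False using assms by (blast dest: asympD)
  qed
  moreover have "x \<notin> set xs" "y \<notin> set ys'"
    using Cons.prems ys assms by (auto dest: asympD)
  ultimately have "set xs = set ys'" using Cons.prems ys by auto
  then show ?case using Cons ys \<open>x = y\<close> by auto
qed

definition faa_mset :: "nat \<Rightarrow> nat list \<Rightarrow> 'a list \<Rightarrow> 'a multiset" where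
  "faa_mset n k B = (\<Sum>j<n. replicate_mset (k ! j) (B ! j))"

lemma size_faa_mset: "size (faa_mset n k B) = (\<Sum>j<n. k ! j)"
  by (induction n) (auto simp: faa_mset_def)

lemma sum_mset_image_faa_mset:
  "sum_mset (image_mset f (faa_mset n k B)) = (\<Sum>j<n. k ! j * f (B ! j))"
  by (induction n) (auto simp: faa_mset_def)

lemma set_mset_faa_mset: "set_mset (faa_mset n k B) = (!) B ` {j. j < n \<and> 0 < k ! j}"
  by (auto simp: faa_mset_def set_mset_sum)

lemma count_faa_mset:
  assumes "inj_on ((!) B) {j. j < n \<and> 0 < k ! j}" and "j < n" and "0 < k ! j"
  shows "count (faa_mset n k B) (B ! j) = k ! j"
proof -
  have "count (faa_mset n k B) (B ! j) = (\<Sum>i<n. if B ! i = B ! j then k ! i else 0)"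
    by (auto simp: faa_mset_def count_sum intro!: sum.cong)
  also have "\<dots> = (\<Sum>i<n. if i = j then k ! i else 0)"
    using assms by (intro sum.cong) (auto dest: inj_onD)
  finally show ?thesis using assms(2) by simp
qed

lemma card_permutations_of_faa_mset:
  assumes "inj_on ((!) B) {j. j < n \<and> 0 < k ! j}"
  shows "card (permutations_of_multiset (faa_mset n k B)) * (\<Prod>j<n. fact (k ! j))
           = fact (\<Sum>j<n. k ! j)"
proof -
  let ?M = "faa_mset n k B"
  have "(\<Prod>v\<in>set_mset ?M. fact (count ?M v)) = (\<Prod>j | j < n \<and> 0 < k ! j. fact (count ?M (B ! j)) :: nat)"
    unfolding set_mset_faa_mset by (rule prod.reindex[OF assms, unfolded comp_def])
  also have "\<dots> = (\<Prod>j | j < n \<and> 0 < k ! j. fact (k ! j))"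
    using assms by (intro prod.cong) (auto simp: count_faa_mset)
  also have "\<dots> = (\<Prod>j<n. fact (k ! j))"
    by (rule prod.mono_neutral_left) auto
  finally show ?thesis
    using card_permutations_of_multiset_aux[of ?M] by (simp add: size_faa_mset)
qed

lemma faa_pE:
  fixes \<beta> :: "nat list" and n defines "n \<equiv> sum_list \<beta>"
  assumes "(k, B) \<in> faa_p d \<beta> r"
  obtains s where "s \<le> n" "length k = n" "length B = n" "\<forall>j<n. length (B ! j) = d"
    "{j. j < n \<and> 0 < k ! j} = {n - s..<n}"
    "\<forall>j<n - s. B ! j = replicate d 0"
    "sorted_wrt (mi_prec d) (replicate d 0 # map ((!) B) [n - s..<n])"
    "sum_list k = r" "\<forall>i<d. (\<Sum>j<n. k ! j * B ! j ! i) = \<beta> ! i"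
proof -
  from assms obtain s where
    lens: "length k = n" "length B = n" "\<forall>j<n. length (B ! j) = d" and
    s: "1 \<le> s" "s \<le> n" and
    zero: "\<forall>j<n - s. k ! j = 0 \<and> B ! j = replicate d 0" and
    pos: "\<forall>j. n - s \<le> j \<and> j < n \<longrightarrow> 0 < k ! j" and
    first: "mi_prec d (replicate d 0) (B ! (n - s))" and
    step: "\<forall>j. n - s \<le> j \<and> j + 1 < n \<longrightarrow> mi_prec d (B ! j) (B ! (j + 1))" and
    sums: "sum_list k = r" "\<forall>i<d. (\<Sum>j<n. k ! j * B ! j ! i) = \<beta> ! i"
    unfolding faa_p_def Let_def by blast
  have "{j. j < n \<and> 0 < k ! j} = {n - s..<n}"
    using zero pos by (auto simp: not_less)
  moreover have "sorted_wrt (mi_prec d) (replicate d 0 # map ((!) B) [n - s..<n])"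
    unfolding sorted_wrt_iff_nth_Suc_transp[OF transp_mi_prec]
  proof (intro allI impI)
    fix i assume i: "Suc i < length (replicate d 0 # map ((!) B) [n - s..<n])"
    show "mi_prec d ((replicate d 0 # map ((!) B) [n - s..<n]) ! i)
                    ((replicate d 0 # map ((!) B) [n - s..<n]) ! Suc i)"
    proof (cases i)
      case 0 then show ?thesis using first s by simp
    next
      case (Suc i')
      then have "n - s + i' + 1 < n" using i s by simp
      then show ?thesis using step Suc by (simp add: add.commute)
    qed
  qed
  ultimately show ?thesis using that s lens zero sums by blast
qed

lemma faa_p_inj_on_support:
  assumes "(k, B) \<in> faa_p d \<beta> r"
  shows "inj_on ((!) B) {j. j < sum_list \<beta> \<and> 0 < k ! j}"
proof -
  obtain s where support: "{j. j < sum_list \<beta> \<and> 0 < k ! j} = {sum_list \<beta> - s..<sum_list \<beta>}"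
    and sorted: "sorted_wrt (mi_prec d) (replicate d 0 # map ((!) B) [sum_list \<beta> - s..<sum_list \<beta>])"
    using assms by (rule faa_pE)
  have "distinct (map ((!) B) [sum_list \<beta> - s..<sum_list \<beta>])"
    by (rule sorted_wrt_asymp_distinct[OF asymp_mi_prec[of d]]) (use sorted in simp)
  then show ?thesis
    unfolding support by (simp add: distinct_map)
qed

lemma faa_p_weight:
  assumes "(k, B) \<in> faa_p d \<beta> r"
  shows "real (fact r) / (\<Prod>j<sum_list \<beta>. real (fact (k ! j)))
           = real (card (permutations_of_multiset (faa_mset (sum_list \<beta>) k B)))"
proof -
  obtain "length k = sum_list \<beta>" "sum_list k = r"
    using assms by (rule faa_pE)
  then have "(\<Sum>j<sum_list \<beta>. k ! j) = r"
    by (simp add: sum_list_sum_nth atLeast0LessThan)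
  then have "real (card (permutations_of_multiset (faa_mset (sum_list \<beta>) k B)))
               * (\<Prod>j<sum_list \<beta>. real (fact (k ! j))) = real (fact r)"
    using card_permutations_of_faa_mset[OF faa_p_inj_on_support[OF assms]]
    by (metis of_nat_fact of_nat_mult of_nat_prod)
  moreover have "(\<Prod>j<sum_list \<beta>. real (fact (k ! j))) > 0"
    by (intro prod_pos) auto
  ultimately show ?thesis by (simp add: field_simps)
qed

text \<open>The parts of a Faa di Bruno tuple are the \<prec>-sorted list of the distinct parts, padded
  with zeros on the left, so they are determined by the set of parts.\<close>

lemma faa_p_parts_unique:
  assumes x: "(k, B) \<in> faa_p d \<beta> r" and y: "(k', B') \<in> faa_p d \<beta> r"
    and eq: "set_mset (faa_mset (sum_list \<beta>) k B) = set_mset (faa_mset (sum_list \<beta>) k' B')"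
  shows "B = B'" and "\<And>j. j < sum_list \<beta> \<Longrightarrow> 0 < k ! j \<longleftrightarrow> 0 < k' ! j"
proof -
  let ?n = "sum_list \<beta>"
  obtain s where s: "s \<le> ?n" and lens: "length B = ?n"
    and support: "{j. j < ?n \<and> 0 < k ! j} = {?n - s..<?n}"
    and zeros: "\<forall>j<?n - s. B ! j = replicate d 0"
    and sorted: "sorted_wrt (mi_prec d) (replicate d 0 # map ((!) B) [?n - s..<?n])"
    using x by (rule faa_pE)
  obtain s' where s': "s' \<le> ?n" and lens': "length B' = ?n"
    and support': "{j. j < ?n \<and> 0 < k' ! j} = {?n - s'..<?n}"
    and zeros': "\<forall>j<?n - s'. B' ! j = replicate d 0"
    and sorted': "sorted_wrt (mi_prec d) (replicate d 0 # map ((!) B') [?n - s'..<?n])"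
    using y by (rule faa_pE)
  have "set (map ((!) B) [?n - s..<?n]) = set (map ((!) B') [?n - s'..<?n])"
    using eq support support' by (simp add: set_mset_faa_mset)
  then have L: "map ((!) B) [?n - s..<?n] = map ((!) B') [?n - s'..<?n]"
    by (rule sorted_wrt_asymp_unique[OF asymp_mi_prec[of d], rotated 2]) (use sorted sorted' in simp_all)
  then have "s = s'"
    using s s' by (metis diff_diff_cancel length_map length_upt)
  then show "0 < k ! j \<longleftrightarrow> 0 < k' ! j" if "j < ?n" for j
    using that arg_cong[OF support, of "(\<in>) j"] arg_cong[OF support', of "(\<in>) j"] by simp
  show "B = B'"
  proof (rule nth_equalityI)
    fix j assume j: "j < length B"
    show "B ! j = B' ! j"
    proof (cases "j < ?n - s")
      case True then show ?thesis using zeros zeros' \<open>s = s'\<close> by simp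
    next
      case False
      then have "B ! j = map ((!) B) [?n - s..<?n] ! (j - (?n - s))"
        using j lens by simp
      also have "\<dots> = map ((!) B') [?n - s'..<?n] ! (j - (?n - s'))"
        by (subst L) (simp add: \<open>s = s'\<close>)
      also have "\<dots> = B' ! j"
        using False j lens \<open>s = s'\<close> by simp
      finally show ?thesis .
    qed
  qed (use lens lens' in simp)
qed

lemma inj_on_faa_mset_faa_p: "inj_on (\<lambda>(k, B). faa_mset (sum_list \<beta>) k B) (faa_p d \<beta> r)"
proof (rule inj_onI, clarify)
  let ?n = "sum_list \<beta>"
  fix k B k' B'
  assume x: "(k, B) \<in> faa_p d \<beta> r" and y: "(k', B') \<in> faa_p d \<beta> r"
    and eq: "faa_mset ?n k B = faa_mset ?n k' B'"
  have B: "B = B'" and support: "\<And>j. j < ?n \<Longrightarrow> 0 < k ! j \<longleftrightarrow> 0 < k' ! j"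
    using faa_p_parts_unique[OF x y] eq by simp_all
  obtain "length k = ?n" using x by (rule faa_pE)
  moreover obtain "length k' = ?n" using y by (rule faa_pE)
  moreover have "k ! j = k' ! j" if j: "j < ?n" for j
  proof (cases "0 < k ! j")
    case True
    with j support have "0 < k' ! j" by simp
    have "k ! j = count (faa_mset ?n k B) (B ! j)"
      using count_faa_mset[OF faa_p_inj_on_support[OF x] j True] by simp
    also have "\<dots> = k' ! j"
      using B eq count_faa_mset[OF faa_p_inj_on_support[OF y] j \<open>0 < k' ! j\<close>] by simp
    finally show ?thesis .
  next
    case False
    with j support have "\<not> 0 < k' ! j" by simp
    with False show ?thesis by simp
  qed
  ultimately have "k = k'" by (simp add: nth_equalityI)
  with B show "k = k' \<and> B = B'" by simp
qed

definition vector_compositions :: "nat \<Rightarrow> nat list \<Rightarrow> nat list list set" where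
  "vector_compositions d \<beta> = {vs. (\<forall>v\<in>set vs. length v = d \<and> v \<noteq> replicate d 0) \<and>
                                 (\<forall>i<d. (\<Sum>v\<leftarrow>vs. v ! i) = \<beta> ! i)}"

lemma ex_nth_pos_if_ne_replicate_zero:
  assumes "length (v :: nat list) = d" and "v \<noteq> replicate d 0"
  obtains i where "i < d" and "0 < v ! i"
  using assms replicate_eqI[of v d 0] by (metis in_set_conv_nth gr0I)

lemma vector_compositions_sum_zero:
  assumes "length \<beta> = d" and "sum_list \<beta> = 0"
  shows "vector_compositions d \<beta> \<subseteq> {[]}"
proof
  fix vs assume vs: "vs \<in> vector_compositions d \<beta>"
  show "vs \<in> {[]}"
  proof (cases vs)
    case (Cons v ws)
    then have "length v = d" "v \<noteq> replicate d 0" using vs by (auto simp: vector_compositions_def)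
    then obtain i where i: "i < d" "0 < v ! i" by (rule ex_nth_pos_if_ne_replicate_zero)
    have "(\<Sum>u\<leftarrow>vs. u ! i) = \<beta> ! i" using vs i by (auto simp: vector_compositions_def)
    moreover have "\<beta> ! i = 0" using assms i by (simp add: sum_list_eq_0_iff)
    ultimately show ?thesis using Cons i by simp
  qed simp
qed

lemma decrement_ne_replicate_zero:
  assumes "length (v :: nat list) = d" and "0 < v ! i" and "v \<noteq> (replicate d 0)[i := 1]"
  shows "v[i := v ! i - 1] \<noteq> replicate d 0"
proof
  assume zero: "v[i := v ! i - 1] = replicate d 0"
  have "v = (replicate d 0)[i := 1]"
  proof (rule nth_equalityI)
    fix j assume "j < length v"
    then show "v ! j = (replicate d 0)[i := 1] ! j"
      using assms(1,2) arg_cong[OF zero, of "\<lambda>u. u ! j"] by (cases "j = i") auto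
  qed (use assms(1) in simp)
  with assms(3) show False ..
qed

text \<open>For a coordinate i where the first part is positive, that part is either the unit vector
  e_i, or it stays nonzero after subtracting e_i; the two images cover these two cases.\<close>

lemma vector_compositions_cover:
  assumes "length \<beta> = d" and "sum_list \<beta> \<noteq> 0"
  shows "vector_compositions d \<beta> \<subseteq>
           (\<Union>i\<in>{i. i < d \<and> 0 < \<beta> ! i}.
              Cons ((replicate d 0)[i := 1]) ` vector_compositions d (\<beta>[i := \<beta> ! i - 1]) \<union>
              (\<lambda>ws. (hd ws)[i := hd ws ! i + 1] # tl ws) ` vector_compositions d (\<beta>[i := \<beta> ! i - 1]))"
    (is "_ \<subseteq> (\<Union>i\<in>_. ?U i \<union> ?V i)")
proof
  fix vs assume vs: "vs \<in> vector_compositions d \<beta>"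
  have "vs \<noteq> []"
    using vs assms by (auto simp: vector_compositions_def sum_list_sum_nth atLeast0LessThan)
  then obtain v ws where vws: "vs = v # ws" by (cases vs) auto
  have v: "length v = d" "v \<noteq> replicate d 0"
    and ws: "\<forall>u\<in>set ws. length u = d \<and> u \<noteq> replicate d 0"
    using vs vws by (auto simp: vector_compositions_def)
  have coord: "v ! j + (\<Sum>u\<leftarrow>ws. u ! j) = \<beta> ! j" if "j < d" for j
    using vs vws that by (auto simp: vector_compositions_def)
  obtain i where i: "i < d" "0 < v ! i" using v by (rule ex_nth_pos_if_ne_replicate_zero)
  have "0 < \<beta> ! i" using coord[OF i(1)] i by simp
  moreover have "vs \<in> ?U i \<union> ?V i"
  proof (cases "v = (replicate d 0)[i := 1]")
    case True
    have "(\<Sum>u\<leftarrow>ws. u ! j) = \<beta>[i := \<beta> ! i - 1] ! j" if "j < d" for j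
      using coord[OF that] that True i(1) assms(1) by (cases "j = i") auto
    then have "ws \<in> vector_compositions d (\<beta>[i := \<beta> ! i - 1])"
      using ws by (simp add: vector_compositions_def)
    then show ?thesis using vws True by blast
  next
    case False
    let ?w = "v[i := v ! i - 1]"
    have "?w # ws \<in> vector_compositions d (\<beta>[i := \<beta> ! i - 1])"
      using ws v coord i assms(1) decrement_ne_replicate_zero[OF v(1) i(2) False]
      by (auto simp: vector_compositions_def nth_list_update)
    moreover have "(hd (?w # ws))[i := hd (?w # ws) ! i + 1] # tl (?w # ws) = vs"
      using vws i v by simp
    ultimately show ?thesis by (metis (no_types, lifting) UnI2 image_eqI)
  qed
  ultimately show "vs \<in> (\<Union>i\<in>{i. i < d \<and> 0 < \<beta> ! i}. ?U i \<union> ?V i)" using i by blast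
qed

lemma finite_card_vector_compositions:
  assumes "length \<beta> = d"
  shows "finite (vector_compositions d \<beta>) \<and> card (vector_compositions d \<beta>) \<le> (2 * d) ^ sum_list \<beta>"
  using assms
proof (induction "sum_list \<beta>" arbitrary: \<beta>)
  case 0
  then have sub: "vector_compositions d \<beta> \<subseteq> {[]}" by (simp add: vector_compositions_sum_zero)
  then have "card (vector_compositions d \<beta>) \<le> card {[] :: nat list list}"
    by (rule card_mono[rotated]) simp
  then show ?case using finite_subset[OF sub] by (simp flip: 0(1))
next
  case (Suc m)
  define I where "I = {i. i < d \<and> 0 < \<beta> ! i}"
  define C where "C i = vector_compositions d (\<beta>[i := \<beta> ! i - 1])" for i
  have IH: "finite (C i) \<and> card (C i) \<le> (2 * d) ^ m" if "i \<in> I" for i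
  proof -
    have "sum_list (\<beta>[i := \<beta> ! i - 1]) = m"
      using that Suc.hyps(2) Suc.prems by (auto simp: I_def sum_list_update elem_le_sum_list)
    then show ?thesis using Suc.hyps(1)[of "\<beta>[i := \<beta> ! i - 1]"] Suc.prems by (simp add: C_def)
  qed
  let ?U = "\<lambda>i. Cons ((replicate d 0)[i := 1]) ` C i \<union> (\<lambda>ws. (hd ws)[i := hd ws ! i + 1] # tl ws) ` C i"
  have cover: "vector_compositions d \<beta> \<subseteq> (\<Union>i\<in>I. ?U i)"
    unfolding I_def C_def
    by (rule vector_compositions_cover[OF Suc.prems]) (metis Suc.hyps(2) Zero_not_Suc)
  have card_U: "card (?U i) \<le> 2 * (2 * d) ^ m" if "i \<in> I" for i
  proof -
    have "card (?U i) \<le> card (C i) + card (C i)"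
      by (intro card_Un_le[THEN order_trans] add_mono card_image_le) (use IH[OF that] in auto)
    then show ?thesis using IH[OF that] by linarith
  qed
  have "finite I" "card I \<le> d"
    unfolding I_def by (auto intro: card_mono[of "{..<d}", simplified])
  then have "finite (\<Union>i\<in>I. ?U i)" using IH by (intro finite_UN_I finite_UnI finite_imageI) auto
  moreover have "card (\<Union>i\<in>I. ?U i) \<le> (2 * d) ^ Suc m"
  proof -
    have "card (\<Union>i\<in>I. ?U i) \<le> (\<Sum>i\<in>I. card (?U i))" by (rule card_UN_le[OF \<open>finite I\<close>])
    also have "\<dots> \<le> card I * (2 * (2 * d) ^ m)" using sum_mono[OF card_U] by simp
    also have "\<dots> \<le> (2 * d) ^ Suc m" using \<open>card I \<le> d\<close> by simp
    finally show ?thesis .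
  qed
  ultimately show ?case
    using finite_subset[OF cover] card_mono[OF _ cover] Suc.hyps(2) by fastforce
qed

lemma permutations_of_faa_mset_subset:
  assumes "(k, B) \<in> faa_p d \<beta> r"
  shows "permutations_of_multiset (faa_mset (sum_list \<beta>) k B)
           \<subseteq> {vs \<in> vector_compositions d \<beta>. length vs = r}"
proof
  let ?n = "sum_list \<beta>"
  fix xs assume "xs \<in> permutations_of_multiset (faa_mset ?n k B)"
  then have M: "mset xs = faa_mset ?n k B" by (rule permutations_of_multisetD)
  obtain s where lens: "length k = ?n" "\<forall>j<?n. length (B ! j) = d"
    and support: "{j. j < ?n \<and> 0 < k ! j} = {?n - s..<?n}"
    and sorted: "sorted_wrt (mi_prec d) (replicate d 0 # map ((!) B) [?n - s..<?n])"
    and sums: "sum_list k = r" "\<forall>i<d. (\<Sum>j<?n. k ! j * B ! j ! i) = \<beta> ! i"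
    using assms by (rule faa_pE)
  have "length xs = r"
    using arg_cong[OF M, of size] lens sums by (simp add: size_faa_mset sum_list_sum_nth atLeast0LessThan)
  moreover have "length v = d \<and> v \<noteq> replicate d 0" if "v \<in> set xs" for v
  proof -
    have "v \<in> set (map ((!) B) [?n - s..<?n])"
      using that M support by (metis set_mset_faa_mset set_mset_mset set_map set_upt)
    then have "mi_prec d (replicate d 0) v" and "length v = d" using sorted lens by auto
    then show ?thesis using asymp_mi_prec[of d] by (auto dest: asympD)
  qed
  moreover have "(\<Sum>v\<leftarrow>xs. v ! i) = \<beta> ! i" if "i < d" for i
  proof -
    have "(\<Sum>v\<leftarrow>xs. v ! i) = sum_mset (image_mset (\<lambda>v. v ! i) (mset xs))"
      by (metis mset_map sum_mset_sum_list)
    also have "\<dots> = (\<Sum>j<?n. k ! j * B ! j ! i)" unfolding M by (rule sum_mset_image_faa_mset)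
    finally show ?thesis using sums that by simp
  qed
  ultimately show "xs \<in> {vs \<in> vector_compositions d \<beta>. length vs = r}"
    by (simp add: vector_compositions_def)
qed

lemma sum_faa_p_weights_le:
  assumes "length \<beta> = d"
  shows "(\<Sum>(k, B) \<in> faa_p d \<beta> r. real (fact r) / (\<Prod>j<sum_list \<beta>. real (fact (k ! j))))
           \<le> real (card {vs \<in> vector_compositions d \<beta>. length vs = r})"
proof -
  let ?P = "faa_p d \<beta> r" and ?F = "{vs \<in> vector_compositions d \<beta>. length vs = r}"
  let ?\<phi> = "\<lambda>(k, B). faa_mset (sum_list \<beta>) k B"
  have "(\<Sum>(k, B) \<in> ?P. real (fact r) / (\<Prod>j<sum_list \<beta>. real (fact (k ! j))))
          = (\<Sum>x\<in>?P. real (card (permutations_of_multiset (?\<phi> x))))"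
    by (intro sum.cong) (auto simp: faa_p_weight simp del: of_nat_fact)
  also have "\<dots> = (\<Sum>M\<in>?\<phi> ` ?P. real (card (permutations_of_multiset M)))"
    by (simp add: sum.reindex[OF inj_on_faa_mset_faa_p])
  also have "\<dots> \<le> real (card ?F)"
  proof (cases "finite (?\<phi> ` ?P)")
    case True
    have "(\<Sum>M\<in>?\<phi> ` ?P. card (permutations_of_multiset M)) = card (\<Union>M\<in>?\<phi> ` ?P. permutations_of_multiset M)"
      by (rule card_UN_disjoint[symmetric]) (use True in \<open>auto dest!: permutations_of_multisetD\<close>)
    also have "\<dots> \<le> card ?F"
      using permutations_of_faa_mset_subset finite_card_vector_compositions[OF assms]
      by (intro card_mono) fastforce+
    finally show ?thesis by (simp flip: of_nat_sum)
  qed simp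
  finally show ?thesis .
qed

lemma sum_card_fibres_le:
  assumes "finite A" and "finite R"
  shows "(\<Sum>r\<in>R. card {x \<in> A. f x = r}) \<le> card A"
proof -
  have "(\<Sum>r\<in>R. card {x \<in> A. f x = r}) = (\<Sum>r\<in>R \<inter> f ` A. card {x \<in> A. f x = r})"
    by (rule sum.mono_neutral_right) (use assms in auto)
  also have "\<dots> = card (\<Union>r\<in>R \<inter> f ` A. {x \<in> A. f x = r})"
    by (rule card_UN_disjoint[symmetric]) (use assms in auto)
  also have "\<dots> \<le> card A" by (rule card_mono[OF assms(1)]) auto
  finally show ?thesis .
qed

lemma sum_binomial_faa_p_weights_le:
  assumes "length \<beta> = d"
  shows "(\<Sum>r = 1..sum_list \<beta>. real (sum_list \<beta> choose r) *
            (\<Sum>(k, B) \<in> faa_p d \<beta> r. real (fact r) / (\<Prod>j<sum_list \<beta>. real (fact (k ! j)))))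
         \<le> 2 ^ sum_list \<beta> * real (card (vector_compositions d \<beta>))"
proof -
  let ?n = "sum_list \<beta>" and ?V = "vector_compositions d \<beta>"
  let ?S = "\<lambda>r. \<Sum>(k, B) \<in> faa_p d \<beta> r. real (fact r) / (\<Prod>j<?n. real (fact (k ! j)))"
  have "(\<Sum>r = 1..?n. real (?n choose r) * ?S r)
        \<le> (\<Sum>r = 1..?n. 2 ^ ?n * real (card {vs \<in> ?V. length vs = r}))"
  proof (rule sum_mono)
    fix r
    have "real (?n choose r) \<le> 2 ^ ?n"
      using binomial_le_pow2[of ?n r] by (metis of_nat_le_iff of_nat_numeral of_nat_power)
    moreover have "0 \<le> ?S r" by (intro sum_nonneg) (auto intro!: divide_nonneg_nonneg prod_nonneg)
    ultimately show "real (?n choose r) * ?S r \<le> 2 ^ ?n * real (card {vs \<in> ?V. length vs = r})"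
      using sum_faa_p_weights_le[OF assms] by (intro mult_mono) auto
  qed
  also have "\<dots> = 2 ^ ?n * real (\<Sum>r = 1..?n. card {vs \<in> ?V. length vs = r})"
    by (simp add: sum_distrib_left)
  also have "\<dots> \<le> 2 ^ ?n * real (card ?V)"
    using sum_card_fibres_le[OF _ finite_atLeastAtMost] finite_card_vector_compositions[OF assms]
    by (intro mult_left_mono of_nat_mono) auto
  finally show ?thesis .
qed

lemma double_le_power_two: "2 * d \<le> (2::nat) ^ d"
proof (induction d)
  case (Suc d) then show ?case by (cases d) auto
qed simp

theorem lemma7p4:
  fixes d :: nat and \<beta> :: "nat list"
  assumes "length \<beta> = d" and "\<beta> \<noteq> replicate d 0"
  shows "(\<Sum>r = 1..sum_list \<beta>. real (sum_list \<beta> choose r) *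
            (\<Sum>(k, B) \<in> faa_p d \<beta> r. real (fact r) / (\<Prod>j<sum_list \<beta>. real (fact (k ! j)))))
         \<le> 2 ^ (sum_list \<beta> * (d + 1))"
  \<comment> \<open>For \<beta> = 0 the sum is empty.\<close>
proof -
  let ?n = "sum_list \<beta>"
  have "(\<Sum>r = 1..?n. real (?n choose r) *
            (\<Sum>(k, B) \<in> faa_p d \<beta> r. real (fact r) / (\<Prod>j<?n. real (fact (k ! j)))))
        \<le> 2 ^ ?n * real (card (vector_compositions d \<beta>))"
    using assms(1) by (rule sum_binomial_faa_p_weights_le)
  also have "\<dots> \<le> 2 ^ ?n * real ((2 ^ d) ^ ?n)"
    using finite_card_vector_compositions[OF assms(1)] power_mono[OF double_le_power_two]
    by (intro mult_left_mono of_nat_mono) (auto intro: le_trans)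
  also have "\<dots> = 2 ^ (?n * (d + 1))"
    by (simp add: power_mult[symmetric] power_add[symmetric] algebra_simps)
  finally show ?thesis .
qed

end
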